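(* Let $d\ge1$, $\ell\ge 2$, and let $u,v$ be vertices of the cyclic Kautz digraph $CK(d,\ell)$. There is a directed path from $u$ to $v$ in $CK(d,\ell)$ if and only if $v$ can be obtained from $u$ by a finite sequence of the following operations: (i) rotation, replacing $a_1a_2\ldots a_\ell$ by $a_2\ldots a_\ell a_1$; (ii) valid swap, replacing a single symbol $a_i$ by a symbol $x\in\Sigma$ that differs from both cyclic neighbours $a_{i-1}$ and $a_{i+1}$ (indices taken cyclically modulo $\ell$).
   Context: Let $\Sigma=\{0,1,\dots,d\}$. The cyclic Kautz digraph $CK(d,\ell)$ has as vertices all sequences $a_1\ldots a_\ell\in\Sigma^\ell$ with $a_i\neq a_{i+1}$ for $1\le i\le \ell-1$ and $a_1\neq a_\ell$, with an arc from $a_1\ldots a_\ell$ to $b_1\ldots b_\ell$ iff both are vertices and $b_i=a_{i+1}$ for $1\le i\le\ell-1$. Both operations map vertices of $CK(d,\ell)$ to vertices of $CK(d,\ell)$ (a vertex can be viewed as a cyclic arrangement of symbols on a disc with a marked starting position; rotation moves the marked position). *)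

theory Defs
  imports Main
begin

text \<open>Alphabet Sigma = {0,...,d}; vertices of CK(d,l) are lists of length l.\<close>

definition ck_vertex :: "nat \<Rightarrow> nat \<Rightarrow> nat list \<Rightarrow> bool" where
  "ck_vertex d l a \<longleftrightarrow> length a = l \<and> (\<forall>i<l. a ! i \<le> d)
     \<and> (\<forall>i. i + 1 < l \<longrightarrow> a ! i \<noteq> a ! (i + 1))
     \<and> a ! 0 \<noteq> a ! (l - 1)"

definition ck_arc :: "nat \<Rightarrow> nat \<Rightarrow> nat list \<Rightarrow> nat list \<Rightarrow> bool" where
  "ck_arc d l a b \<longleftrightarrow> ck_vertex d l a \<and> ck_vertex d l b
     \<and> (\<forall>i. i + 1 < l \<longrightarrow> b ! i = a ! (i + 1))"

definition ck_rotation :: "nat list \<Rightarrow> nat list" where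
  "ck_rotation a = rotate1 a"

definition ck_valid_swap :: "nat \<Rightarrow> nat \<Rightarrow> nat list \<Rightarrow> nat list \<Rightarrow> bool" where
  "ck_valid_swap d l a b \<longleftrightarrow> (\<exists>i x. i < l \<and> x \<le> d
      \<and> x \<noteq> a ! ((i + l - 1) mod l) \<and> x \<noteq> a ! ((i + 1) mod l)
      \<and> b = a[i := x])"

definition ck_op :: "nat \<Rightarrow> nat \<Rightarrow> nat list \<Rightarrow> nat list \<Rightarrow> bool" where
  "ck_op d l a b \<longleftrightarrow> b = ck_rotation a \<or> ck_valid_swap d l a b"

end

theory Submission
  imports Defs
begin

text \<open>A step along an arc shifts the word left and appends a new last symbol; this is a rotation
followed by a valid swap at the last position. Conversely, a rotation is itself an arc, and a
valid swap at position \<open>i\<close> is realised by rotating \<open>i\<close> times, taking the single arc that drops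
\<open>a\<^sub>i\<close> and appends the new symbol \<open>x\<close>, and rotating the remaining \<open>\<ell> - i - 1\<close> times back.
Rotations and valid swaps keep the cyclic Kautz condition, so every intermediate word is a
vertex.\<close>

lemma ck_vertex_iff_cyclic:
  assumes "l \<ge> 2"
  shows "ck_vertex d l a \<longleftrightarrow>
    length a = l \<and> (\<forall>i<l. a ! i \<le> d \<and> a ! i \<noteq> a ! (Suc i mod l))"
proof
  assume a: "ck_vertex d l a"
  have "a ! i \<noteq> a ! (Suc i mod l)" if "i < l" for i
  proof (cases "Suc i < l")
    case True
    then show ?thesis using a by (simp add: ck_vertex_def)
  next
    case False
    with that have "i = l - 1" "Suc i = l" by auto
    then show ?thesis using a by (auto simp: ck_vertex_def)
  qed
  then show "length a = l \<and> (\<forall>i<l. a ! i \<le> d \<and> a ! i \<noteq> a ! (Suc i mod l))"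
    using a by (simp add: ck_vertex_def)
next
  assume a: "length a = l \<and> (\<forall>i<l. a ! i \<le> d \<and> a ! i \<noteq> a ! (Suc i mod l))"
  have "a ! (l - 1) \<noteq> a ! 0"
    using a[THEN conjunct2, rule_format, of "l - 1"] assms by simp
  moreover have "a ! i \<noteq> a ! (i + 1)" if "i + 1 < l" for i
    using a that by (metis Suc_eq_plus1 Suc_lessD mod_less)
  ultimately show "ck_vertex d l a"
    using a by (auto simp: ck_vertex_def)
qed

lemma ck_vertex_rotate:
  assumes "l \<ge> 2" "ck_vertex d l a"
  shows "ck_vertex d l (rotate k a)"
proof -
  have len: "length a = l"
    and cyc: "\<And>i. i < l \<Longrightarrow> a ! i \<le> d \<and> a ! i \<noteq> a ! (Suc i mod l)"
    using assms by (auto simp: ck_vertex_iff_cyclic)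
  have "rotate k a ! i \<le> d \<and> rotate k a ! i \<noteq> rotate k a ! (Suc i mod l)" if "i < l" for i
  proof -
    have "(k + Suc i mod l) mod l = Suc ((k + i) mod l) mod l"
      by (metis add_Suc_right mod_Suc_eq mod_add_right_eq)
    then show ?thesis
      using that len cyc[of "(k + i) mod l"] by (simp add: nth_rotate)
  qed
  then show ?thesis
    using assms(1) len by (simp add: ck_vertex_iff_cyclic)
qed

lemma ck_arc_rotate1:
  assumes "l \<ge> 2" "ck_vertex d l a"
  shows "ck_arc d l a (rotate1 a)"
  using assms ck_vertex_rotate[OF assms, of 1]
  by (auto simp: ck_arc_def ck_vertex_def nth_rotate1)

lemma ck_path_rotate:
  assumes "l \<ge> 2" "ck_vertex d l a"
  shows "(ck_arc d l)\<^sup>*\<^sup>* a (rotate k a)"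
proof (induction k)
  case 0
  then show ?case by simp
next
  case (Suc k)
  then show ?case
    using ck_arc_rotate1[OF assms(1) ck_vertex_rotate[OF assms]]
    by (simp add: rtranclp.rtrancl_into_rtrancl)
qed

lemma mod_Suc_eq_iff_pred_mod:
  assumes "i < l" "j < l"
  shows "Suc j mod l = i \<longleftrightarrow> (i + l - 1) mod l = j"
proof (cases "Suc j < l")
  case True
  then show ?thesis
    using assms by (cases i) (auto simp: mod_if)
next
  case False
  with assms have "j = l - 1" by simp
  then show ?thesis
    using assms by (cases i) (auto simp: mod_if)
qed

lemma ck_vertex_valid_swap:
  assumes "l \<ge> 2" "ck_vertex d l a" "ck_valid_swap d l a b"
  shows "ck_vertex d l b"
proof -
  obtain i x where i: "i < l" and x: "x \<le> d"
      "x \<noteq> a ! ((i + l - 1) mod l)" "x \<noteq> a ! (Suc i mod l)"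
    and b: "b = a[i := x]"
    using assms(3) by (auto simp: ck_valid_swap_def)
  have len: "length a = l"
    and cyc: "\<And>j. j < l \<Longrightarrow> a ! j \<le> d \<and> a ! j \<noteq> a ! (Suc j mod l)"
    using assms by (auto simp: ck_vertex_iff_cyclic)
  have "b ! j \<le> d \<and> b ! j \<noteq> b ! (Suc j mod l)" if j: "j < l" for j
  proof -
    have "Suc j mod l \<noteq> j"
      using j assms(1) by (cases "Suc j = l") auto
    moreover have "Suc j mod l = i \<longleftrightarrow> (i + l - 1) mod l = j"
      using mod_Suc_eq_iff_pred_mod[OF i j] .
    ultimately show ?thesis
      using b len j i x cyc[OF j] by (cases "j = i") auto
  qed
  then show ?thesis
    using assms(1) len b by (simp add: ck_vertex_iff_cyclic)
qed

lemma ck_op_vertex: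
  assumes "l \<ge> 2" "ck_vertex d l a" "ck_op d l a b"
  shows "ck_vertex d l b"
  using assms(3) ck_vertex_rotate[OF assms(1,2), of 1] ck_vertex_valid_swap[OF assms(1,2)]
  unfolding ck_op_def ck_rotation_def by auto

text \<open>The last symbol of an arc's head is a valid replacement for the last symbol of the
rotated tail: its cyclic neighbours there are the neighbours it already has in the head.\<close>

lemma ck_arc_imp_valid_swap_rotate1:
  assumes "l \<ge> 2" "ck_arc d l a b"
  shows "ck_valid_swap d l (rotate1 a) b"
proof -
  have va: "ck_vertex d l a" and vb: "ck_vertex d l b"
    and shift: "\<And>j. j + 1 < l \<Longrightarrow> b ! j = a ! (j + 1)"
    using assms(2) by (auto simp: ck_arc_def)
  have la: "length a = l" and lb: "length b = l"
    using va vb by (auto simp: ck_vertex_def)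
  have r: "rotate1 a ! j = b ! j" if "j + 1 < l" for j
    using that la shift[OF that] by (simp add: nth_rotate1)
  have pred: "(l - 1 + l - 1) mod l = l - 2"
    using assms(1) by (simp add: mod_if)
  have "b = (rotate1 a)[l - 1 := b ! (l - 1)]"
    using la lb r by (intro nth_equalityI) (auto simp: nth_list_update)
  moreover have "b ! (l - 1) \<noteq> rotate1 a ! (l - 2)"
  proof -
    have "b ! (l - 2) \<noteq> b ! (l - 2 + 1)"
      using vb assms(1) by (simp add: ck_vertex_def)
    moreover have "l - 2 + 1 = l - 1"
      using assms(1) by simp
    ultimately show ?thesis
      using r[of "l - 2"] assms(1) by simp
  qed
  moreover have "b ! (l - 1) \<noteq> rotate1 a ! 0"
    using vb r[of 0] assms(1) by (simp add: ck_vertex_def)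
  moreover have "b ! (l - 1) \<le> d"
    using vb assms(1) by (simp add: ck_vertex_def)
  ultimately show ?thesis
    unfolding ck_valid_swap_def using assms(1) pred
    by (intro exI[of _ "l - 1"] exI[of _ "b ! (l - 1)"]) auto
qed

lemma ck_arc_imp_ops:
  assumes "l \<ge> 2" "ck_arc d l a b"
  shows "(ck_op d l)\<^sup>*\<^sup>* a b"
proof -
  have "ck_op d l a (rotate1 a)"
    by (simp add: ck_op_def ck_rotation_def)
  moreover have "ck_op d l (rotate1 a) b"
    using ck_arc_imp_valid_swap_rotate1[OF assms] by (simp add: ck_op_def)
  ultimately show ?thesis by auto
qed

lemma nth_rotate_Suc_list_update:
  assumes "i < length a" "j + 1 < length a"
  shows "rotate (Suc i) (a[i := x]) ! j = rotate i a ! (j + 1)"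
proof -
  have "(Suc i + j) mod length a \<noteq> i"
    using assms by (cases "Suc i + j < length a") (auto simp: mod_if)
  then show ?thesis
    using assms by (simp add: nth_rotate del: rotate_Suc)
qed

lemma ck_valid_swap_imp_path:
  assumes "l \<ge> 2" "ck_vertex d l a" "ck_valid_swap d l a b"
  shows "(ck_arc d l)\<^sup>*\<^sup>* a b"
proof -
  obtain i x where i: "i < l" and b: "b = a[i := x]"
    using assms(3) by (auto simp: ck_valid_swap_def)
  have vb: "ck_vertex d l b"
    using ck_vertex_valid_swap[OF assms] .
  have la: "length a = l"
    using assms(2) by (simp add: ck_vertex_def)
  have "(ck_arc d l)\<^sup>*\<^sup>* a (rotate i a)"
    using ck_path_rotate[OF assms(1,2)] .
  moreover have "ck_arc d l (rotate i a) (rotate (Suc i) b)"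
    using ck_vertex_rotate[OF assms(1,2)] ck_vertex_rotate[OF assms(1) vb]
      nth_rotate_Suc_list_update[of i a] i la b
    by (simp add: ck_arc_def del: rotate_Suc)
  moreover have "(ck_arc d l)\<^sup>*\<^sup>* (rotate (Suc i) b) (rotate (l - Suc i) (rotate (Suc i) b))"
    using ck_path_rotate[OF assms(1) ck_vertex_rotate[OF assms(1) vb]] .
  moreover have "rotate (l - Suc i) (rotate (Suc i) b) = b"
    using i la b by (simp add: rotate_rotate del: rotate_Suc)
  ultimately show ?thesis
    by (metis rtranclp.rtrancl_into_rtrancl rtranclp_trans)
qed

lemma ck_ops_imp_path:
  assumes "l \<ge> 2" "ck_vertex d l u" "(ck_op d l)\<^sup>*\<^sup>* u v"
  shows "(ck_arc d l)\<^sup>*\<^sup>* u v"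
proof -
  from assms(3) have "(ck_arc d l)\<^sup>*\<^sup>* u v \<and> ck_vertex d l v"
  proof (induction rule: rtranclp_induct)
    case base
    then show ?case using assms(2) by simp
  next
    case (step y z)
    then have "(ck_arc d l)\<^sup>*\<^sup>* y z"
      using assms(1) ck_arc_rotate1 ck_valid_swap_imp_path
      by (auto simp: ck_op_def ck_rotation_def)
    then show ?case
      using step assms(1) ck_op_vertex by (meson rtranclp_trans)
  qed
  then show ?thesis ..
qed

theorem lemma3:
  fixes d l :: nat and u v :: "nat list"
  assumes "d \<ge> 1" and "l \<ge> 2"
    and "ck_vertex d l u" and "ck_vertex d l v"
  shows "(ck_arc d l)\<^sup>*\<^sup>* u v \<longleftrightarrow> (ck_op d l)\<^sup>*\<^sup>* u v"
proof
  assume "(ck_arc d l)\<^sup>*\<^sup>* u v"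
  moreover have "ck_arc d l \<le> (ck_op d l)\<^sup>*\<^sup>*"
    using ck_arc_imp_ops[OF assms(2)] by blast
  ultimately show "(ck_op d l)\<^sup>*\<^sup>* u v"
    using rtranclp_mono by (metis predicate2D rtranclp_idemp)
next
  assume "(ck_op d l)\<^sup>*\<^sup>* u v"
  then show "(ck_arc d l)\<^sup>*\<^sup>* u v"
    using ck_ops_imp_path assms(2,3) by blast
qed

end
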